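(* Let $X$ be a Tychonoff space. The following are equivalent: (1) $X$ is dense-pseudocompact; (2) for every continuous function $f\colon X\to\mathbb{R}$, the range $f(X)$ is finite; (3) $X$ is finite; (4) $X$ is hereditarily pseudocompact (every subspace of $X$ is pseudocompact).
   Context: A space is pseudocompact if every continuous real-valued function on it is bounded. A space $X$ is dense-pseudocompact if every dense subset of $X$ (with the subspace topology) is pseudocompact. *)

theory Defs
  imports "HOL-Analysis.Analysis"
begin

definition tychonoff_space :: "'a topology \<Rightarrow> bool" where
  "tychonoff_space X \<longleftrightarrow> completely_regular_space X \<and> t1_space X"

definition pseudocompact_space :: "'a topology \<Rightarrow> bool" where
  "pseudocompact_space X \<longleftrightarrow>
     (\<forall>f::'a \<Rightarrow> real. continuous_map X euclideanreal f \<longrightarrow> bounded (f ` topspace X))"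

definition dense_pseudocompact_space :: "'a topology \<Rightarrow> bool" where
  "dense_pseudocompact_space X \<longleftrightarrow>
     (\<forall>D. D \<subseteq> topspace X \<and> X closure_of D = topspace X \<longrightarrow> pseudocompact_space (subtopology X D))"

definition hereditarily_pseudocompact_space :: "'a topology \<Rightarrow> bool" where
  "hereditarily_pseudocompact_space X \<longleftrightarrow>
     (\<forall>S. S \<subseteq> topspace X \<longrightarrow> pseudocompact_space (subtopology X S))"

end

theory Submission
  imports Defs
begin

text \<open>If \<open>f\<close> is continuous with infinite range on a dense-pseudocompact space, the range is
bounded and so has a limit point \<open>c\<close>; then \<open>1/(f - c)\<close> is continuous and unbounded on the dense
set \<open>{f \<noteq> c} \<union> int {f = c}\<close>. Conversely, in a Tychonoff space where every continuous real function
has finite range, Urysohn functions have clopen fibres, so points are separated by clopen sets.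
An infinite such space then contains a strictly decreasing chain of clopen sets \<open>B n\<close>, and the
function equal to \<open>(1/2)^n\<close> on the layer \<open>B (n - 1) - B n\<close> and to \<open>0\<close> on \<open>\<Inter>n. B n\<close> is
continuous with infinite range.\<close>

lemma continuous_map_real_iff_local:
  "continuous_map X euclideanreal f \<longleftrightarrow>
    (\<forall>x\<in>topspace X. \<forall>\<epsilon>>0. \<exists>U. openin X U \<and> x \<in> U \<and> (\<forall>y\<in>U. dist (f x) (f y) < \<epsilon>))"
  using Met_TC.continuous_map_to_metric by simp

lemma continuous_map_on_open_Un:
  assumes "openin X S" "openin X T"
    and "continuous_map (subtopology X S) Y f" "continuous_map (subtopology X T) Y f"
  shows "continuous_map (subtopology X (S \<union> T)) Y f"
proof (rule pasting_lemma[where I="{S, T}" and T=id and f="\<lambda>_. f"])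
  fix U assume "U \<in> {S, T}"
  then have "U \<subseteq> S \<union> T" by blast
  with \<open>U \<in> {S, T}\<close> assms show "openin (subtopology X (S \<union> T)) (id U)"
    by (auto simp: openin_subtopology)
  show "continuous_map (subtopology (subtopology X (S \<union> T)) (id U)) Y f"
    using \<open>U \<in> {S, T}\<close> \<open>U \<subseteq> S \<union> T\<close> assms
    by (auto simp: subtopology_subtopology Int_absorb1)
qed auto

lemma dense_Un_interior_of_complement:
  "X closure_of (S \<union> X interior_of (topspace X - S)) = topspace X"
proof -
  have "X closure_of S \<union> (topspace X - X closure_of S) \<subseteq> X closure_of (S \<union> X interior_of (topspace X - S))"
    by (metis closure_of_Un closure_of_subset interior_of_complement interior_of_subset_topspace Un_mono order_refl)
  then show ?thesis
    by (metis Diff_partition closure_of_subset_topspace subset_antisym)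
qed

lemma dense_pseudocompact_imp_pseudocompact:
  "dense_pseudocompact_space X \<Longrightarrow> pseudocompact_space X"
  unfolding dense_pseudocompact_space_def
  by (metis closure_of_topspace order_refl subtopology_topspace)

lemma finite_topspace_imp_pseudocompact:
  "finite (topspace X) \<Longrightarrow> pseudocompact_space X"
  by (simp add: pseudocompact_space_def finite_imp_bounded)

lemma dense_pseudocompact_not_islimpt_range:
  assumes dp: "dense_pseudocompact_space X" and f: "continuous_map X euclideanreal f"
  shows "\<not> c islimpt (f ` topspace X)"
proof
  assume c: "c islimpt (f ` topspace X)"
  define P where "P = {x \<in> topspace X. f x \<noteq> c}"
  define D where "D = P \<union> X interior_of (topspace X - P)"
  define h where "h x = inverse (f x - c)" for x
  have "openin X P"
    unfolding P_def using openin_continuous_map_preimage[OF f, of "- {c}"] by auto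
  have "continuous_map (subtopology X D) euclideanreal h"
    unfolding D_def
  proof (rule continuous_map_on_open_Un)
    show "continuous_map (subtopology X P) euclideanreal h"
      unfolding h_def
      by (intro continuous_map_real_inverse continuous_map_from_subtopology continuous_intros f)
         (auto simp: P_def)
    \<comment> \<open>here \<open>f x = c\<close>, and \<open>inverse 0 = 0\<close>\<close>
    have "h x = 0" if "x \<in> X interior_of (topspace X - P)" for x
      using that interior_of_subset[of X "topspace X - P"] interior_of_subset_topspace[of X]
      by (force simp: h_def P_def)
    then show "continuous_map (subtopology X (X interior_of (topspace X - P))) euclideanreal h"
      by (intro continuous_map_eq[OF continuous_map_const[THEN iffD2]]) auto
  qed (use \<open>openin X P\<close> in auto)
  moreover have D: "D \<subseteq> topspace X"
    using openin_subset[OF \<open>openin X P\<close>] interior_of_subset_topspace[of X] by (auto simp: D_def)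
  moreover have "pseudocompact_space (subtopology X D)"
    using dp D dense_Un_interior_of_complement[of X P]
    unfolding dense_pseudocompact_space_def D_def by blast
  ultimately have "bounded (h ` D)"
    unfolding pseudocompact_space_def by (metis Int_absorb1 topspace_subtopology)
  then obtain B where B: "\<And>x. x \<in> D \<Longrightarrow> \<bar>h x\<bar> \<le> B"
    unfolding bounded_real by blast
  obtain y where "y \<in> f ` topspace X" "y \<noteq> c" "dist y c < inverse (\<bar>B\<bar> + 1)"
    using c unfolding islimpt_approachable by (meson inverse_positive_iff_positive abs_ge_zero add_nonneg_pos zero_less_one)
  then obtain x where x: "x \<in> P" "\<bar>f x - c\<bar> < inverse (\<bar>B\<bar> + 1)"
    by (auto simp: P_def dist_real_def)
  moreover have "0 < \<bar>f x - c\<bar>"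
    using x by (simp add: P_def)
  ultimately have "\<bar>B\<bar> + 1 < \<bar>h x\<bar>"
    using less_imp_inverse_less by (fastforce simp: h_def abs_inverse)
  with B[of x] x show False by (simp add: D_def)
qed

lemma dense_pseudocompact_imp_finite_range:
  assumes "dense_pseudocompact_space X" "continuous_map X euclideanreal f"
  shows "finite (f ` topspace X)"
proof (rule ccontr)
  assume "infinite (f ` topspace X)"
  moreover have "bounded (f ` topspace X)"
    using assms dense_pseudocompact_imp_pseudocompact pseudocompact_space_def by blast
  ultimately show False
    using bounded_infinite_imp_islimpt dense_pseudocompact_not_islimpt_range assms by blast
qed

definition finite_range_space :: "'a topology \<Rightarrow> bool" where
  "finite_range_space X \<longleftrightarrow>
     (\<forall>f::'a \<Rightarrow> real. continuous_map X euclideanreal f \<longrightarrow> finite (f ` topspace X))"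

lemma finite_range_space_fibre_clopen:
  assumes "finite_range_space X" "continuous_map X euclideanreal f"
  shows "openin X {x \<in> topspace X. f x = a}" "closedin X {x \<in> topspace X. f x = a}"
proof -
  have "open (- (f ` topspace X - {a}))"
    using assms by (intro open_Compl finite_imp_closed) (simp add: finite_range_space_def)
  then have "openin X {x \<in> topspace X. f x \<in> - (f ` topspace X - {a})}"
    by (metis open_openin openin_continuous_map_preimage assms(2))
  moreover have "{x \<in> topspace X. f x \<in> - (f ` topspace X - {a})} = {x \<in> topspace X. f x = a}"
    by auto
  ultimately show "openin X {x \<in> topspace X. f x = a}" by simp
  show "closedin X {x \<in> topspace X. f x = a}"
    using closedin_continuous_map_preimage[OF assms(2), of "{a}"] by simp
qed

lemma tychonoff_finite_range_clopen_separation: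
  assumes "tychonoff_space X" "finite_range_space X"
    and "x \<in> topspace X" "y \<in> topspace X" "x \<noteq> y"
  obtains S where "openin X S" "closedin X S" "x \<in> S" "y \<notin> S"
proof -
  have "closedin X {y}"
    using assms by (simp add: tychonoff_space_def closedin_t1_singleton)
  moreover have "x \<in> topspace X - {y}"
    using assms by blast
  ultimately obtain g :: "'a \<Rightarrow> real"
    where "continuous_map X (top_of_set {0..1}) g" "g x = 0" "g ` {y} \<subseteq> {1}"
    using assms(1) unfolding tychonoff_space_def completely_regular_space_def by blast
  then have g: "continuous_map X euclideanreal g" "g x = 0" "g y = 1"
    using continuous_map_in_subtopology by auto
  show thesis
    by (rule that[of "{z \<in> topspace X. g z = 0}"])
      (use finite_range_space_fibre_clopen[OF assms(2) g(1)] g assms(3) in auto)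
qed

lemma tychonoff_finite_range_split_clopen:
  assumes "tychonoff_space X" "finite_range_space X"
    and "openin X C" "closedin X C" "infinite C"
  obtains B where "B \<subseteq> C" "openin X B" "closedin X B" "infinite B" "C - B \<noteq> {}"
proof -
  obtain x where "x \<in> C"
    using \<open>infinite C\<close> infinite_imp_nonempty by blast
  moreover obtain y where "y \<in> C - {x}"
    using \<open>infinite C\<close> infinite_imp_nonempty[of "C - {x}"] by auto
  ultimately have xy: "x \<in> C" "y \<in> C" "x \<noteq> y"
    by auto
  moreover have "C \<subseteq> topspace X"
    using assms openin_subset by blast
  ultimately obtain S where S: "openin X S" "closedin X S" "x \<in> S" "y \<notin> S"
    by (meson tychonoff_finite_range_clopen_separation[OF assms(1,2)] subsetD)
  have "infinite (C \<inter> S) \<or> infinite (C - S)"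
    using \<open>infinite C\<close> Int_Diff_Un[of C S] finite_Un[of "C \<inter> S" "C - S"] by argo
  then show thesis
  proof
    assume "infinite (C \<inter> S)"
    moreover have "openin X (C \<inter> S)" "closedin X (C \<inter> S)"
      using openin_Int[OF assms(3) S(1)] closedin_Int[OF assms(4) S(2)] by auto
    ultimately show thesis
      using S xy by (intro that[of "C \<inter> S"]) auto
  next
    assume "infinite (C - S)"
    moreover have "openin X (C - S)" "closedin X (C - S)"
      using openin_diff[OF assms(3) S(2)] closedin_diff[OF assms(4) S(1)] by auto
    ultimately show thesis
      using S xy by (intro that[of "C - S"]) auto
  qed
qed

lemma tychonoff_finite_range_clopen_chain:
  assumes "tychonoff_space X" "finite_range_space X" "infinite (topspace X)"
  obtains B :: "nat \<Rightarrow> 'a set"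
  where "decseq B" "B 0 = topspace X" "\<And>n. openin X (B n)" "\<And>n. closedin X (B n)"
    "\<And>n. B n - B (Suc n) \<noteq> {}"
proof -
  let ?P = "\<lambda>(n::nat) C. openin X C \<and> closedin X C \<and> infinite C \<and> (n = 0 \<longrightarrow> C = topspace X)"
  have "\<exists>B. \<forall>n. ?P n (B n) \<and> B (Suc n) \<subseteq> B n \<and> B n - B (Suc n) \<noteq> {}"
  proof (rule dependent_nat_choice)
    show "\<exists>C. ?P 0 C"
      using assms(3) by (intro exI[of _ "topspace X"]) simp
    fix C n assume "?P n C"
    then obtain C' where "C' \<subseteq> C" "openin X C'" "closedin X C'" "infinite C'" "C - C' \<noteq> {}"
      by (meson tychonoff_finite_range_split_clopen[OF assms(1,2)])
    then show "\<exists>C'. ?P (Suc n) C' \<and> C' \<subseteq> C \<and> C - C' \<noteq> {}"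
      by (intro exI[of _ C']) simp
  qed
  then obtain B where B: "\<And>n. ?P n (B n)" "\<And>n. B (Suc n) \<subseteq> B n" "\<And>n. B n - B (Suc n) \<noteq> {}"
    by blast
  show thesis
    by (rule that[of B]) (use B in \<open>simp_all add: decseq_Suc_iff\<close>)
qed

definition chain_exit_height :: "(nat \<Rightarrow> 'a set) \<Rightarrow> 'a \<Rightarrow> real" where
  "chain_exit_height B x = (if \<exists>n. x \<notin> B n then (1/2) ^ (LEAST n. x \<notin> B n) else 0)"

lemma chain_exit_height_eq:
  assumes "decseq B" "x \<in> B m" "x \<notin> B (Suc m)"
  shows "chain_exit_height B x = (1/2) ^ Suc m"
proof -
  have "(LEAST n. x \<notin> B n) = Suc m"
  proof (rule Least_equality)
    fix n assume "x \<notin> B n"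
    then show "Suc m \<le> n"
      using assms decseqD[OF assms(1), of n m] by (metis not_less_eq_eq subsetD)
  qed (use assms in auto)
  then show ?thesis
    using assms by (auto simp: chain_exit_height_def)
qed

lemma abs_chain_exit_height_le:
  assumes "decseq B" "x \<in> B N"
  shows "\<bar>chain_exit_height B x\<bar> \<le> (1/2) ^ N"
proof (cases "\<exists>n. x \<notin> B n")
  case True
  then have "x \<notin> B (LEAST n. x \<notin> B n)"
    by (rule LeastI_ex)
  then have "N < (LEAST n. x \<notin> B n)"
    using assms decseqD[OF assms(1)] by (metis not_less subsetD)
  then show ?thesis
    using True by (simp add: chain_exit_height_def power_decreasing)
qed (simp add: chain_exit_height_def)

lemma chain_exit_layer:
  assumes "x \<in> B 0" "x \<notin> B n"
  obtains m where "x \<in> B m" "x \<notin> B (Suc m)"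
  using assms by (induction n) auto

lemma continuous_map_chain_exit_height:
  assumes "decseq B" "B 0 = topspace X" "\<And>n. openin X (B n)" "\<And>n. closedin X (B n)"
  shows "continuous_map X euclideanreal (chain_exit_height B)"
  unfolding continuous_map_real_iff_local
proof (intro ballI allI impI)
  fix x and \<epsilon> :: real
  assume "x \<in> topspace X" "\<epsilon> > 0"
  show "\<exists>U. openin X U \<and> x \<in> U \<and> (\<forall>y\<in>U. dist (chain_exit_height B x) (chain_exit_height B y) < \<epsilon>)"
  proof (cases "\<exists>n. x \<notin> B n")
    case True
    then obtain m where m: "x \<in> B m" "x \<notin> B (Suc m)"
      using chain_exit_layer assms(2) \<open>x \<in> topspace X\<close> by metis
    show ?thesis
    proof (intro exI conjI ballI)
      show "openin X (B m - B (Suc m))"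
        using assms by (intro openin_diff)
      fix y assume "y \<in> B m - B (Suc m)"
      then have "chain_exit_height B y = chain_exit_height B x"
        using chain_exit_height_eq[OF assms(1)] m by (metis DiffE)
      then show "dist (chain_exit_height B x) (chain_exit_height B y) < \<epsilon>"
        using \<open>\<epsilon> > 0\<close> by simp
    qed (use m in simp)
  next
    case False
    then have "chain_exit_height B x = 0"
      by (simp add: chain_exit_height_def)
    obtain N where N: "(1/2::real) ^ N < \<epsilon>"
      using real_arch_pow_inv[OF \<open>\<epsilon> > 0\<close>, of "1/2"] by auto
    show ?thesis
    proof (intro exI conjI ballI)
      fix y assume "y \<in> B N"
      then have "\<bar>chain_exit_height B y\<bar> \<le> (1/2) ^ N"
        by (rule abs_chain_exit_height_le[OF assms(1)])
      then show "dist (chain_exit_height B x) (chain_exit_height B y) < \<epsilon>"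
        using N \<open>chain_exit_height B x = 0\<close> by (simp add: dist_real_def)
    qed (use assms(3) False in auto)
  qed
qed

lemma infinite_range_chain_exit_height:
  assumes "decseq B" "B 0 = topspace X" "\<And>n. B n - B (Suc n) \<noteq> {}"
  shows "infinite (chain_exit_height B ` topspace X)"
proof -
  have "\<forall>m. \<exists>y. y \<in> B m - B (Suc m)"
    using assms(3) by blast
  then obtain a where a: "\<And>m. a m \<in> B m - B (Suc m)"
    by metis
  have "a m \<in> topspace X" for m
    using a assms(2) decseqD[OF assms(1), of 0 m] by blast
  moreover have "chain_exit_height B (a m) = (1/2) ^ Suc m" for m
    using a chain_exit_height_eq[OF assms(1)] by blast
  ultimately have "range (\<lambda>m. (1/2::real) ^ Suc m) \<subseteq> chain_exit_height B ` topspace X"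
    by (metis image_subsetI rev_image_eqI)
  moreover have "infinite (range (\<lambda>m. (1/2::real) ^ Suc m))"
    by (intro range_inj_infinite injI) (simp add: power_one_over)
  ultimately show ?thesis
    using finite_subset by blast
qed

lemma tychonoff_finite_range_imp_finite:
  assumes "tychonoff_space X" "finite_range_space X"
  shows "finite (topspace X)"
proof (rule ccontr)
  assume "infinite (topspace X)"
  then obtain B where B: "decseq B" "B 0 = topspace X" "\<And>n. openin X (B n)"
    "\<And>n. closedin X (B n)" "\<And>n. B n - B (Suc n) \<noteq> {}"
    using tychonoff_finite_range_clopen_chain[OF assms] by blast
  have "continuous_map X euclideanreal (chain_exit_height B)"
    using B by (intro continuous_map_chain_exit_height)
  with assms(2) infinite_range_chain_exit_height[OF B(1,2,5)] show False
    unfolding finite_range_space_def by blast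
qed

lemma finite_topspace_imp_hereditarily_pseudocompact:
  "finite (topspace X) \<Longrightarrow> hereditarily_pseudocompact_space X"
  unfolding hereditarily_pseudocompact_space_def
  by (metis finite_Int finite_topspace_imp_pseudocompact topspace_subtopology)

theorem theorem3p3:
  fixes X :: "'a topology"
  assumes "tychonoff_space X"
  shows "(dense_pseudocompact_space X
            \<longleftrightarrow> (\<forall>f::'a \<Rightarrow> real. continuous_map X euclideanreal f \<longrightarrow> finite (f ` topspace X)))
       \<and> ((\<forall>f::'a \<Rightarrow> real. continuous_map X euclideanreal f \<longrightarrow> finite (f ` topspace X))
            \<longleftrightarrow> finite (topspace X))
       \<and> (finite (topspace X) \<longleftrightarrow> hereditarily_pseudocompact_space X)"
proof -
  have "dense_pseudocompact_space X \<Longrightarrow> finite_range_space X"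
    by (simp add: finite_range_space_def dense_pseudocompact_imp_finite_range)
  moreover have "finite_range_space X \<Longrightarrow> finite (topspace X)"
    using tychonoff_finite_range_imp_finite[OF assms] .
  moreover have "finite (topspace X) \<Longrightarrow> hereditarily_pseudocompact_space X"
    by (rule finite_topspace_imp_hereditarily_pseudocompact)
  moreover have "hereditarily_pseudocompact_space X \<Longrightarrow> dense_pseudocompact_space X"
    unfolding hereditarily_pseudocompact_space_def dense_pseudocompact_space_def by blast
  moreover have "finite (topspace X) \<Longrightarrow> finite_range_space X"
    by (simp add: finite_range_space_def)
  ultimately show ?thesis
    unfolding finite_range_space_def by blast
qed

end
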